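(* Let $p$ be a complex polynomial of degree $d \geq 2$, and let $H_p = \operatorname{conv} J_p$ be the convex hull of its Julia set. Then $p^{-1}(H_p) \subset H_p$.
   Context: For a polynomial $p$ viewed as a holomorphic self-map of the Riemann sphere $\widehat{\mathbb{C}}$ (with $p(\infty)=\infty$), the Fatou set $F_p$ is the maximal open subset of $\widehat{\mathbb{C}}$ on which the iterates $\{p^{\circ n}\}_{n\in\mathbb{N}}$ form an equicontinuous family, and the Julia set $J_p$ is the complement $\widehat{\mathbb{C}}\setminus F_p$; for polynomials $J_p$ is a nonempty compact subset of $\mathbb{C}$. $\operatorname{conv} X$ denotes the convex hull of $X \subset \mathbb{C}\cong\mathbb{R}^2$. *)

theory Defs
  imports "HOL-Analysis.Analysis" "HOL-Computational_Algebra.Polynomial"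
begin

text \<open>Chordal (spherical) metric on the Riemann sphere, restricted to finite points.\<close>
definition chordal_dist :: "complex \<Rightarrow> complex \<Rightarrow> real" where
  "chordal_dist a b = 2 * cmod (a - b) / (sqrt (1 + (cmod a)\<^sup>2) * sqrt (1 + (cmod b)\<^sup>2))"

definition iterates_equicontinuous_on :: "complex set \<Rightarrow> (complex \<Rightarrow> complex) \<Rightarrow> bool" where
  "iterates_equicontinuous_on U f \<longleftrightarrow>
     (\<forall>z\<in>U. \<forall>e>0. \<exists>d>0. \<forall>n::nat. \<forall>w\<in>U.
        cmod (w - z) < d \<longrightarrow> chordal_dist ((f ^^ n) w) ((f ^^ n) z) < e)"

text \<open>Finite part of the Fatou set: union of all open sets on which the iterates are equicontinuous.
  (For a polynomial of degree at least 2, \<infinity> always lies in the Fatou set.)\<close>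
definition fatou_set :: "complex poly \<Rightarrow> complex set" where
  "fatou_set p = \<Union>{U. open U \<and> iterates_equicontinuous_on U (poly p)}"

definition julia_set :: "complex poly \<Rightarrow> complex set" where
  "julia_set p = UNIV - fatou_set p"

end

theory Submission
  imports Defs "HOL-Complex_Analysis.Complex_Analysis"
    "HOL-Computational_Algebra.Fundamental_Theorem_Algebra"
begin

text \<open>
  The Julia set \<open>J\<close> is compact (a neighbourhood of \<open>\<infinity>\<close> escapes uniformly) and satisfies
  \<open>p\<^sup>-\<^sup>1(J) \<subseteq> J\<close>, because the Fatou set is forward invariant under the open map \<open>p\<close>.
  Suppose \<open>p(x) \<in> conv J\<close> but \<open>x \<notin> conv J\<close>, and separate \<open>x\<close> from \<open>conv J\<close> by a line. For every
  \<open>w \<in> J\<close> all roots of \<open>p - w\<close> lie in \<open>J\<close>, hence on the far side of that line, so the logarithmic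
  derivative \<open>p'(x)/(p(x) - w) = \<Sum> 1/(x - r)\<close> lies in a fixed open half-plane. Equivalently \<open>w\<close>
  lies in an open half-plane whose boundary passes through \<open>p(x)\<close>; this half-plane then contains
  \<open>conv J\<close>, contradicting \<open>p(x) \<in> conv J\<close>.
\<close>

subsection \<open>A Gauss--Lucas type inequality\<close>

lemma Re_logderiv_poly_pos:
  fixes q :: "complex poly"
  assumes "degree q \<ge> 1" "poly q x \<noteq> 0"
    and "\<And>r. poly q r = 0 \<Longrightarrow> Re (a / (x - r)) > 0"
  shows "Re (a * (poly (pderiv q) x / poly q x)) > 0"
  using assms
proof (induction "degree q" arbitrary: q)
  case 0
  then show ?case by simp
next
  case (Suc m q)
  have "\<not> constant (poly q)"
    using Suc.hyps(2) by (metis constant_degree Suc_neq_Zero)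
  then obtain r where r: "poly q r = 0" using fundamental_theorem_of_algebra by blast
  then obtain s where qs: "q = [:-r, 1:] * s" using poly_eq_0_iff_dvd by blast
  have "s \<noteq> 0" using qs Suc.prems by auto
  then have "degree q = Suc (degree s)" unfolding qs by (subst degree_mult_eq) auto
  then have ds: "degree s = m" using Suc.hyps(2) by simp
  have xr: "x - r \<noteq> 0" and sx: "poly s x \<noteq> 0" using Suc.prems(2) r qs by auto
  have dq: "poly (pderiv q) x = poly s x + (x - r) * poly (pderiv s) x"
    unfolding qs pderiv_mult by (simp add: pderiv_pCons algebra_simps)
  have "poly q x = (x - r) * poly s x" by (simp add: qs algebra_simps)
  then have split: "poly (pderiv q) x / poly q x = 1 / (x - r) + poly (pderiv s) x / poly s x"
    unfolding dq using xr sx by (simp add: field_simps)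
  have "Re (a / (x - r)) > 0" using Suc.prems(3) r .
  moreover have "Re (a * (poly (pderiv s) x / poly s x)) \<ge> 0"
  proof (cases "m = 0")
    case True
    then have "pderiv s = 0" using ds pderiv_eq_0_iff by blast
    then show ?thesis by simp
  next
    case False
    have "Re (a * (poly (pderiv s) x / poly s x)) > 0"
      using Suc.hyps(1) False ds sx Suc.prems(3) qs by auto
    then show ?thesis by simp
  qed
  ultimately show ?case by (simp add: split distrib_left)
qed

lemma Re_divide_pos_iff_inner_pos:
  fixes c u :: complex
  shows "Re (c / u) > 0 \<longleftrightarrow> inner c u > 0"
proof -
  have "Re (c / u) = inner c u / (cmod u)\<^sup>2"
    by (simp add: Re_divide inner_complex_def cmod_power2)
  then show ?thesis by (cases "u = 0") (auto simp: divide_pos_pos zero_less_divide_iff)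
qed

lemma Re_cnj_divide_pos:
  fixes a s :: complex
  assumes "Re (a * s) > 0"
  shows "Re (cnj a / s) > 0"
proof -
  have "s \<noteq> 0" using assms by auto
  moreover have "Re (cnj a / s) = Re (a * s) / (cmod s)\<^sup>2"
    by (simp add: Re_divide algebra_simps cmod_power2)
  ultimately show ?thesis using assms by simp
qed

lemma convex_Re_mult_diff_pos: "convex {w. 0 < Re (k * (c - w))}"
proof -
  have "{w. 0 < Re (k * (c - w))} = {w. inner (cnj k) w < Re (k * c)}"
    by (auto simp: inner_complex_def algebra_simps)
  then show ?thesis by (simp add: convex_halfspace_lt)
qed

lemma poly_vimage_convex_hull_subset:
  fixes p :: "complex poly" and A :: "complex set"
  assumes "degree p \<ge> 1" "compact A" and backward: "poly p -` A \<subseteq> A"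
  shows "poly p -` (convex hull A) \<subseteq> convex hull A"
proof
  fix x assume px: "x \<in> poly p -` (convex hull A)"
  define H where "H = convex hull A"
  have "closed H" unfolding H_def by (simp add: assms(2) compact_convex_hull compact_imp_closed)
  show "x \<in> convex hull A"
  proof (rule ccontr)
    assume "x \<notin> convex hull A"
    then have "x \<notin> H" unfolding H_def .
    then obtain c b where "inner c x < b" "\<forall>y\<in>H. inner c y > b"
      using separating_hyperplane_closed_point[OF _ \<open>closed H\<close>] unfolding H_def by blast
    then have H_side: "Re (- c / (x - r)) > 0" if "r \<in> H" for r
    proof -
      have "- c / (x - r) = c / (r - x)" by (simp add: minus_divide_right)
      then show ?thesis
        using that \<open>inner c x < b\<close> \<open>\<forall>y\<in>H. inner c y > b\<close>
        by (force simp: Re_divide_pos_iff_inner_pos inner_diff_right)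
    qed
    have AH: "A \<subseteq> H" unfolding H_def by (rule hull_subset)
    define D where "D = poly (pderiv p) x"
    have "0 < Re (cnj (- c) / D * (poly p x - w))" if "w \<in> A" for w
    proof -
      define q where "q = p - [:w:]"
      have "degree q \<ge> 1"
        using degree_add_eq_left[of "- [:w:]" p] assms(1) unfolding q_def
        by (simp add: diff_conv_add_uminus del: add_uminus_conv_diff)
      moreover have "poly q x \<noteq> 0"
        using that AH backward \<open>x \<notin> convex hull A\<close> unfolding q_def H_def by auto
      moreover have "Re (- c / (x - r)) > 0" if "poly q r = 0" for r
        using that \<open>w \<in> A\<close> backward AH H_side unfolding q_def by auto
      ultimately have "Re (- c * (poly (pderiv q) x / poly q x)) > 0"
        by (rule Re_logderiv_poly_pos)
      moreover have "pderiv q = pderiv p" unfolding q_def by (simp add: pderiv_diff pderiv_pCons)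
      ultimately have "Re (- c * (D / (poly p x - w))) > 0" unfolding q_def D_def by simp
      then show ?thesis using Re_cnj_divide_pos by fastforce
    qed
    then have "A \<subseteq> {w. 0 < Re (cnj (- c) / D * (poly p x - w))}" by blast
    then have "H \<subseteq> {w. 0 < Re (cnj (- c) / D * (poly p x - w))}"
      unfolding H_def by (rule hull_minimal) (rule convex_Re_mult_diff_pos)
    then show False using px unfolding H_def by force
  qed
qed

subsection \<open>Invariance of the Fatou and Julia sets\<close>

lemma iterates_equicontinuous_on_image:
  fixes f :: "complex \<Rightarrow> complex"
  assumes "open U" and equicont: "iterates_equicontinuous_on U f"
    and open_map: "\<And>V. open V \<Longrightarrow> open (f ` V)"
  shows "iterates_equicontinuous_on (f ` U) f"
  unfolding iterates_equicontinuous_on_def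
proof (intro ballI allI impI)
  fix w0 e assume "w0 \<in> f ` U" and "(e::real) > 0"
  then obtain u0 where u0: "u0 \<in> U" "w0 = f u0" by blast
  obtain d1 where "d1 > 0" and d1: "\<And>n u. u \<in> U \<Longrightarrow> cmod (u - u0) < d1 \<Longrightarrow>
      chordal_dist ((f ^^ n) u) ((f ^^ n) u0) < e"
    using equicont u0(1) \<open>e > 0\<close> unfolding iterates_equicontinuous_on_def by blast
  obtain d2 where "d2 > 0" "ball u0 d2 \<subseteq> U"
    using \<open>open U\<close> u0(1) open_contains_ball by blast
  define B where "B = ball u0 (min d1 d2)"
  have "open (f ` B)" "w0 \<in> f ` B"
    unfolding B_def using open_map u0 \<open>d1 > 0\<close> \<open>d2 > 0\<close> by auto
  then obtain d where "d > 0" and d: "ball w0 d \<subseteq> f ` B"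
    using open_contains_ball by blast
  have "chordal_dist ((f ^^ n) w) ((f ^^ n) w0) < e" if w: "cmod (w - w0) < d" for n w
  proof -
    obtain u where u: "u \<in> B" "w = f u"
      using d w by (auto simp: dist_norm norm_minus_commute)
    then have "u \<in> U" "cmod (u - u0) < d1"
      using \<open>ball u0 d2 \<subseteq> U\<close> by (auto simp: B_def dist_norm norm_minus_commute)
    then have "chordal_dist ((f ^^ Suc n) u) ((f ^^ Suc n) u0) < e" by (rule d1)
    then show ?thesis using u u0 by (simp add: funpow_Suc_right del: funpow.simps)
  qed
  then show "\<exists>d>0. \<forall>n. \<forall>w\<in>f ` U. cmod (w - w0) < d \<longrightarrow>
      chordal_dist ((f ^^ n) w) ((f ^^ n) w0) < e"
    using \<open>d > 0\<close> by blast
qed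

lemma open_image_poly:
  fixes p :: "complex poly"
  assumes "degree p \<ge> 1" "open V"
  shows "open (poly p ` V)"
proof (rule open_mapping_thm[where S = UNIV])
  show "\<not> poly p constant_on UNIV"
  proof
    assume "poly p constant_on UNIV"
    then have "constant (poly p)" unfolding constant_on_def constant_def by auto
    then show False using assms(1) constant_degree by force
  qed
qed (use assms(2) in \<open>auto intro: holomorphic_intros\<close>)

lemma poly_in_fatou_set:
  fixes p :: "complex poly"
  assumes "degree p \<ge> 1" "z \<in> fatou_set p"
  shows "poly p z \<in> fatou_set p"
proof -
  obtain U where "open U" "z \<in> U" "iterates_equicontinuous_on U (poly p)"
    using assms(2) unfolding fatou_set_def by blast
  then have "iterates_equicontinuous_on (poly p ` U) (poly p)"
    using iterates_equicontinuous_on_image open_image_poly[OF assms(1)] by blast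
  then show ?thesis
    unfolding fatou_set_def using open_image_poly[OF assms(1) \<open>open U\<close>] \<open>z \<in> U\<close> by blast
qed

lemma julia_set_vimage_subset:
  fixes p :: "complex poly"
  assumes "degree p \<ge> 1"
  shows "poly p -` julia_set p \<subseteq> julia_set p"
  using poly_in_fatou_set[OF assms] unfolding julia_set_def by blast

lemma closed_julia_set: "closed (julia_set p)"
proof -
  have "open (fatou_set p)" unfolding fatou_set_def by auto
  then show ?thesis unfolding julia_set_def by (simp add: closed_def Diff_Diff_Int)
qed

subsection \<open>Compactness of the Julia set\<close>

lemma chordal_dist_le_norm_diff: "chordal_dist a b \<le> 2 * cmod (a - b)"
proof -
  have "1 \<le> sqrt (1 + (cmod a)\<^sup>2) * sqrt (1 + (cmod b)\<^sup>2)"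
    using mult_mono[of 1 "sqrt (1 + (cmod a)\<^sup>2)" 1 "sqrt (1 + (cmod b)\<^sup>2)"] by simp
  then show ?thesis unfolding chordal_dist_def
    by (simp add: divide_le_eq) (smt (verit) mult_le_cancel_left1 norm_ge_zero)
qed

lemma chordal_dist_le_inverse_norms:
  assumes "a \<noteq> 0" "b \<noteq> 0"
  shows "chordal_dist a b \<le> 2 / cmod a + 2 / cmod b"
proof -
  have pos: "cmod a > 0" "cmod b > 0" using assms by auto
  have "cmod a * cmod b \<le> sqrt (1 + (cmod a)\<^sup>2) * sqrt (1 + (cmod b)\<^sup>2)"
    by (intro mult_mono) (auto simp: real_le_rsqrt)
  then have "chordal_dist a b \<le> 2 * cmod (a - b) / (cmod a * cmod b)"
    unfolding chordal_dist_def using pos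
    by (intro divide_left_mono) (auto intro!: mult_pos_pos add_pos_nonneg)
  also have "\<dots> \<le> 2 * (cmod a + cmod b) / (cmod a * cmod b)"
    using pos by (intro divide_right_mono mult_left_mono norm_triangle_ineq4) auto
  also have "\<dots> = 2 / cmod a + 2 / cmod b" using pos by (simp add: field_simps)
  finally show ?thesis .
qed

lemma norm_funpow_ge_if_doubling:
  fixes f :: "complex \<Rightarrow> complex"
  assumes "R > 0" and doubling: "\<And>z. R \<le> cmod z \<Longrightarrow> 2 * cmod z \<le> cmod (f z)"
    and "R \<le> cmod z"
  shows "2 ^ n * cmod z \<le> cmod ((f ^^ n) z)"
proof (induction n)
  case 0
  then show ?case by simp
next
  case (Suc n)
  have "1 * cmod z \<le> 2 ^ n * cmod z" by (intro mult_right_mono) simp_all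
  then have "R \<le> cmod ((f ^^ n) z)" using Suc \<open>R \<le> cmod z\<close> by linarith
  then show ?case using Suc doubling by fastforce
qed

lemma chordal_dist_funpow_le_if_doubling:
  fixes f :: "complex \<Rightarrow> complex"
  assumes "R > 0" and doubling: "\<And>z. R \<le> cmod z \<Longrightarrow> 2 * cmod z \<le> cmod (f z)"
    and "R \<le> cmod w" "R \<le> cmod z"
  shows "chordal_dist ((f ^^ n) w) ((f ^^ n) z) \<le> 4 / (2 ^ n * R)"
proof -
  have "2 ^ n * R \<le> cmod ((f ^^ n) u)" if "R \<le> cmod u" for u
    using norm_funpow_ge_if_doubling[OF assms(1,2) that, of n] that
    by (meson mult_left_mono order_trans zero_le_power zero_le_numeral)
  then have w: "2 ^ n * R \<le> cmod ((f ^^ n) w)" and z: "2 ^ n * R \<le> cmod ((f ^^ n) z)"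
    using assms(3,4) by auto
  have pos: "2 ^ n * R > 0" using \<open>R > 0\<close> by simp
  have "chordal_dist ((f ^^ n) w) ((f ^^ n) z) \<le> 2 / cmod ((f ^^ n) w) + 2 / cmod ((f ^^ n) z)"
    using w z pos by (intro chordal_dist_le_inverse_norms) auto
  also have "\<dots> \<le> 2 / (2 ^ n * R) + 2 / (2 ^ n * R)"
    using w z pos by (intro add_mono divide_left_mono) (auto intro!: mult_pos_pos)
  finally show ?thesis by (simp add: mult.commute)
qed

lemma isCont_funpow:
  fixes f :: "'a::t2_space \<Rightarrow> 'a"
  assumes "\<And>x. isCont f x"
  shows "isCont (f ^^ n) z"
proof (induction n)
  case (Suc n)
  then show ?case by (simp add: assms isCont_o2)
qed simp

lemma iterates_equicontinuous_on_if_doubling: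
  fixes f :: "complex \<Rightarrow> complex"
  assumes cont: "\<And>x. isCont f x"
    and "R > 0" and doubling: "\<And>z. R \<le> cmod z \<Longrightarrow> 2 * cmod z \<le> cmod (f z)"
  shows "iterates_equicontinuous_on {z. R < cmod z} f"
  unfolding iterates_equicontinuous_on_def
proof (intro ballI allI impI)
  fix z e assume z: "z \<in> {z. R < cmod z}" and "(e::real) > 0"
  obtain N where N: "4 / (e * R) < 2 ^ N" using real_arch_pow[of 2 "4 / (e * R)"] by auto
  have tail: "chordal_dist ((f ^^ n) w) ((f ^^ n) z) < e"
    if "N \<le> n" "R < cmod w" for n w
  proof -
    have "chordal_dist ((f ^^ n) w) ((f ^^ n) z) \<le> 4 / (2 ^ n * R)"
      using chordal_dist_funpow_le_if_doubling[OF \<open>R > 0\<close> doubling] that z by simp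
    also have "\<dots> \<le> 4 / (2 ^ N * R)"
      using that(1) \<open>R > 0\<close> by (intro divide_left_mono mult_right_mono power_increasing) auto
    also have "\<dots> < e" using N \<open>e > 0\<close> \<open>R > 0\<close> by (simp add: field_simps)
    finally show ?thesis .
  qed
  have "\<forall>\<^sub>F w in at z. dist ((f ^^ n) w) ((f ^^ n) z) < e / 2" for n
    using isCont_funpow[OF cont, where n = n and z = z] \<open>e > 0\<close>
    unfolding isCont_def tendsto_iff
    by (metis half_gt_zero)
  then have "\<forall>\<^sub>F w in at z. \<forall>n\<in>{..<N}. dist ((f ^^ n) w) ((f ^^ n) z) < e / 2"
    by (intro eventually_ball_finite) auto
  then obtain d where "d > 0" and head: "\<And>w n. w \<noteq> z \<Longrightarrow> dist w z < d \<Longrightarrow> n < N \<Longrightarrow>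
      dist ((f ^^ n) w) ((f ^^ n) z) < e / 2"
    unfolding eventually_at by auto
  have "chordal_dist ((f ^^ n) w) ((f ^^ n) z) < e"
    if "R < cmod w" "cmod (w - z) < d" for n w
  proof (cases "N \<le> n")
    case True
    then show ?thesis using tail that by blast
  next
    case False
    show ?thesis
    proof (cases "w = z")
      case True
      then show ?thesis using \<open>e > 0\<close> by (simp add: chordal_dist_def)
    next
      case False
      then have "cmod ((f ^^ n) w - (f ^^ n) z) < e / 2"
        using head \<open>\<not> N \<le> n\<close> that by (auto simp: dist_norm)
      then show ?thesis using chordal_dist_le_norm_diff[of "(f ^^ n) w" "(f ^^ n) z"] by simp
    qed
  qed
  then show "\<exists>d>0. \<forall>n. \<forall>w\<in>{z. R < cmod z}. cmod (w - z) < d \<longrightarrow>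
      chordal_dist ((f ^^ n) w) ((f ^^ n) z) < e"
    using \<open>d > 0\<close> by blast
qed

lemma poly_doubling_near_infinity:
  fixes p :: "complex poly"
  assumes "degree p \<ge> 2"
  obtains R where "R > 0" "\<And>z. R \<le> cmod z \<Longrightarrow> 2 * cmod z \<le> cmod (poly p z)"
proof -
  obtain a b s where p: "p = pCons a (pCons b s)" by (metis pCons_cases)
  have "s \<noteq> 0" using assms unfolding p by (auto split: if_splits)
  then obtain r where r: "\<And>z. r \<le> cmod z \<Longrightarrow> 3 \<le> cmod (poly (pCons b s) z)"
    using poly_infinity by blast
  have doubling: "2 * cmod z \<le> cmod (poly p z)" if z: "max (max r (cmod a)) 1 \<le> cmod z" for z
  proof -
    have "3 * cmod z \<le> cmod (z * poly (pCons b s) z)"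
      using r[of z] z by (simp add: norm_mult mult_left_mono mult.commute)
    moreover have "cmod (z * poly (pCons b s) z) \<le> cmod (poly p z) + cmod a"
      using norm_triangle_ineq4[of "a + z * poly (pCons b s) z" a] p by simp
    ultimately show ?thesis using z by linarith
  qed
  show ?thesis using doubling by (intro that[of "max (max r (cmod a)) 1"]) auto
qed

lemma compact_julia_set:
  fixes p :: "complex poly"
  assumes "degree p \<ge> 2"
  shows "compact (julia_set p)"
proof -
  obtain R where "R > 0" "\<And>z. R \<le> cmod z \<Longrightarrow> 2 * cmod z \<le> cmod (poly p z)"
    using poly_doubling_near_infinity[OF assms] by blast
  then have "iterates_equicontinuous_on {z. R < cmod z} (poly p)"
    by (intro iterates_equicontinuous_on_if_doubling) auto
  moreover have "open {z. R < cmod z}" by (intro open_Collect_less continuous_intros)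
  ultimately have "{z. R < cmod z} \<subseteq> fatou_set p" unfolding fatou_set_def by blast
  then have "julia_set p \<subseteq> cball 0 R"
    unfolding julia_set_def by auto (meson mem_Collect_eq not_le subsetD)
  then show ?thesis
    using closed_julia_set bounded_cball bounded_subset compact_eq_bounded_closed by blast
qed

theorem mainTheorem1:
  fixes p :: "complex poly"
  assumes "degree p \<ge> 2"
  shows "poly p -` (convex hull (julia_set p)) \<subseteq> convex hull (julia_set p)"
  using assms by (intro poly_vimage_convex_hull_subset compact_julia_set julia_set_vimage_subset) auto

end
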